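(* For all real $x\ge4$, $H'(x)>\dfrac{H(x)\log(H(x))}{x^2}$.
   Context: $H(x)=\int_0^1\frac{t^x-1}{t-1}\,dt$ for real $x\ge1$; it is smooth, satisfies $H(n)=1+\frac12+\cdots+\frac1n$ for $n\in\mathbb{N}$, and $H(x)=\psi(x+1)+\gamma$ with $\psi=\Gamma'/\Gamma$ the digamma function, so $H'(x)=\psi'(x+1)$. *)

theory Defs
  imports "HOL-Analysis.Analysis"
begin

definition H :: "real \<Rightarrow> real" where
  "H x = integral {0..1} (\<lambda>t. (t powr x - 1) / (t - 1))"

end

theory Submission
  imports Defs
begin

text \<open>
  Expanding \<open>1/(1 - t)\<close> as a geometric series and integrating termwise (monotone convergence)
  identifies \<open>H x\<close> with \<open>Digamma (x + 1) + \<gamma>\<close>. Hence \<open>H' x = \<psi>'(x + 1) = \<Sum>k. 1/(x + 1 + k)\<^sup>2\<close>,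
  which dominates the telescoping series of \<open>1/(x + 1 + k) - 1/(x + 2 + k)\<close>, i.e. \<open>H' x \<ge> 1/(x + 1)\<close>.
  On the other side \<open>\<psi>\<close> is increasing with \<open>H n = harm n \<le> 1 + ln n\<close>, so \<open>1 \<le> H x \<le> 1 + ln (x + 1)\<close>,
  and \<open>ln h \<le> h / e\<close> bounds \<open>H x ln (H x)\<close> by \<open>(1 + ln (x + 1))\<^sup>2 / e\<close>. What remains is the
  elementary inequality \<open>(1 + ln y)\<^sup>2 y < e (y - 1)\<^sup>2\<close> for \<open>y = x + 1 \<ge> 5\<close>, which follows from
  \<open>e ln y \<le> 2 \<surd>y\<close>.
\<close>

lemma has_integral_power_01: "((\<lambda>t::real. t ^ n) has_integral inverse (real (Suc n))) {0..1}"
proof -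
  have "((\<lambda>t. t ^ Suc n / real (Suc n)) has_real_derivative
          real (Suc n) * t ^ (Suc n - Suc 0) / real (Suc n)) (at t within {0..1})" for t :: real
    by (intro DERIV_cdivide DERIV_pow)
  then have "((\<lambda>t::real. t ^ n) has_integral (1 ^ Suc n / Suc n - 0 ^ Suc n / Suc n)) {0..1}"
    by (intro fundamental_theorem_of_calculus)
       (auto simp: has_real_derivative_iff_has_vector_derivative[symmetric])
  then show ?thesis
    by (simp add: inverse_eq_divide)
qed

lemma powr_of_nat_add: "(t::real) \<ge> 0 \<Longrightarrow> t powr (real n + a) = t ^ n * t powr a"
  by (cases "t = 0") (simp_all add: powr_add powr_realpow)

lemma has_integral_geometric_powr_partial_sum:
  assumes "x > -1"
  shows "((\<lambda>t. \<Sum>i<k. t ^ i - t powr (real i + x)) has_integral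
           (\<Sum>i<k. inverse (real (Suc i)) - inverse (x + 1 + real i))) {0..1}"
proof (rule has_integral_sum)
  fix i
  have "((\<lambda>t. t powr (real i + x)) has_integral inverse (x + 1 + real i)) {0..1}"
    using has_integral_powr_from_0[of "real i + x" 1] assms by (simp add: inverse_eq_divide add_ac)
  then show "((\<lambda>t. t ^ i - t powr (real i + x)) has_integral
               inverse (real (Suc i)) - inverse (x + 1 + real i)) {0..1}"
    by (intro has_integral_diff has_integral_power_01)
qed simp

text \<open>At \<open>t = 1\<close> both sides vanish, the right one because of \<open>0 / 0 = 0\<close>.\<close>
lemma geometric_powr_partial_sum_tendsto:
  assumes "0 \<le> t" "t \<le> 1"
  shows "(\<lambda>k. \<Sum>i<k. t ^ i - t powr (real i + x)) \<longlonglongrightarrow> (t powr x - 1) / (t - 1)"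
proof (cases "t = 1")
  case False
  with assms have t: "0 \<le> t" "t < 1" by auto
  have "(\<lambda>k. \<Sum>i<k. t ^ i) \<longlonglongrightarrow> 1 / (1 - t)"
    using geometric_sums[of t] t by (simp add: sums_def)
  then have "(\<lambda>k. (1 - t powr x) * (\<Sum>i<k. t ^ i)) \<longlonglongrightarrow> (1 - t powr x) * (1 / (1 - t))"
    by (rule tendsto_mult_left)
  moreover have "(1 - t powr x) * (\<Sum>i<k. t ^ i) = (\<Sum>i<k. t ^ i - t powr (real i + x))" for k
    unfolding sum_distrib_left
    using powr_of_nat_add[of t _ x] t by (intro sum.cong) (simp_all add: algebra_simps)
  moreover have "(1 - t powr x) * (1 / (1 - t)) = (t powr x - 1) / (t - 1)"
    using t by (simp add: field_simps)
  ultimately show ?thesis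
    by simp
qed simp

lemma H_eq_Digamma:
  assumes x: "x \<ge> 0"
  shows "H x = Digamma (x + 1) + euler_mascheroni"
proof -
  define f where "f = (\<lambda>k (t::real). \<Sum>i<k. t ^ i - t powr (real i + x))"
  define a where "a = (\<lambda>i::nat. inverse (real (Suc i)) - inverse (x + 1 + real i))"
  have f_integral: "(f k has_integral (\<Sum>i<k. a i)) {0..1}" for k
    unfolding f_def a_def using x by (intro has_integral_geometric_powr_partial_sum) simp
  have f_mono: "f k t \<le> f (Suc k) t" if "t \<in> {0..1}" for k t
  proof -
    have "t powr x \<le> 1"
      using powr_mono2[of x t 1] that x by auto
    then have "t ^ k * t powr x \<le> t ^ k"
      using that by (simp add: mult_left_le)
    then show ?thesis
      using that by (simp add: f_def powr_of_nat_add)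
  qed
  have a_sums: "(\<lambda>k. \<Sum>i<k. a i) \<longlonglongrightarrow> Digamma (x + 1) + euler_mascheroni"
  proof -
    have "a sums (Digamma (x + 1) + euler_mascheroni)"
      using summable_Digamma[of "x + 1"] x
      by (simp add: a_def Digamma_def summable_sums)
    then show ?thesis
      by (simp add: sums_def)
  qed
  have integral_f: "(\<lambda>k. integral {0..1} (f k)) = (\<lambda>k. \<Sum>i<k. a i)"
    using integral_unique[OF f_integral] by simp
  have "(\<lambda>k. integral {0..1} (f k)) \<longlonglongrightarrow> H x"
    unfolding H_def
  proof (rule conjunct2[OF monotone_convergence_increasing])
    show "f k integrable_on {0..1}" for k
      using f_integral by blast
    show "(\<lambda>k. f k t) \<longlonglongrightarrow> (t powr x - 1) / (t - 1)" if "t \<in> {0..1}" for t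
      using geometric_powr_partial_sum_tendsto that by (simp add: f_def)
    show "bounded (range (\<lambda>k. integral {0..1} (f k)))"
      unfolding integral_f by (rule convergent_imp_bounded[OF a_sums])
  qed (fact f_mono)
  with a_sums show ?thesis
    by (simp add: integral_f LIMSEQ_unique)
qed

lemma H_has_real_derivative:
  assumes x: "x > 0"
  shows "(H has_real_derivative Polygamma 1 (x + 1)) (at x)"
proof -
  have "x + 1 \<notin> \<int>\<^sub>\<le>\<^sub>0"
    using x by (auto elim!: nonpos_Ints_cases)
  then have "((\<lambda>y. Digamma (y + 1) + euler_mascheroni) has_real_derivative Polygamma 1 (x + 1)) (at x)"
    by (auto intro!: derivative_eq_intros)
  then show ?thesis
    by (rule has_field_derivative_transform_within_open[where S = "{0<..}"])
       (use x H_eq_Digamma in auto)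
qed

lemma Polygamma_1_ge_inverse:
  assumes z: "(z::real) > 0"
  shows "Polygamma 1 z \<ge> 1 / z"
proof -
  have squares: "(\<lambda>k. inverse ((z + real k)\<^sup>2)) sums Polygamma 1 z"
    using Polygamma_LIMSEQ[of z 1] z by (simp add: numeral_2_eq_2)
  have "(\<lambda>k. inverse (z + real k)) \<longlonglongrightarrow> 0"
    by (intro tendsto_inverse_0_at_top filterlim_tendsto_add_at_top[OF tendsto_const]
          filterlim_real_sequentially)
  then have telescope: "(\<lambda>k. inverse (z + real k) - inverse (z + real (Suc k))) sums (1 / z)"
    using telescope_sums'[of "\<lambda>k. inverse (z + real k)" 0] by (simp add: inverse_eq_divide)
  have "inverse (z + real k) - inverse (z + real (Suc k)) \<le> inverse ((z + real k)\<^sup>2)" for k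
  proof -
    have p: "z + real k > 0"
      using z by simp
    have "inverse (z + real k) - inverse (z + real (Suc k)) = 1 / ((z + real k) * (z + real k + 1))"
      using p by (simp add: field_simps)
    also have "\<dots> \<le> 1 / ((z + real k) * (z + real k))"
      using p by (intro divide_left_mono mult_left_mono) auto
    finally show ?thesis
      by (simp add: power2_eq_square inverse_eq_divide)
  qed
  then show ?thesis
    using telescope squares by (rule sums_le)
qed

lemma H_ge_1:
  assumes "x \<ge> 1"
  shows "H x \<ge> 1"
proof -
  have "1 = Digamma (real (Suc 1)) + euler_mascheroni"
    by (simp only: Digamma_of_nat) (simp add: harm_def)
  also have "\<dots> \<le> Digamma (x + 1) + euler_mascheroni"
    using assms by (intro add_right_mono Digamma_real_mono) auto
  also have "\<dots> = H x"
    using assms H_eq_Digamma by simp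
  finally show ?thesis .
qed

lemma H_le_ln_plus_1:
  assumes x: "x > 0"
  shows "H x \<le> ln (x + 1) + 1"
proof -
  define n where "n = nat \<lceil>x\<rceil>"
  have n: "n \<ge> 1" "x \<le> real n" "real n < x + 1"
    using x unfolding n_def by linarith+
  have "Digamma (x + 1) \<le> Digamma (real (Suc n))"
    using x n by (intro Digamma_real_mono) auto
  then have "H x \<le> harm n"
    using x H_eq_Digamma[of x] Digamma_of_nat[of n, where 'a = real] by simp
  also have "harm n \<le> ln (real n) + 1"
    using euler_mascheroni_sequence_decreasing[of 1 n] n by (simp add: harm_def)
  also have "ln (real n) \<le> ln (x + 1)"
    using n by simp
  finally show ?thesis
    by simp
qed

lemma ln_le_divide_exp1: "(y::real) > 0 \<Longrightarrow> ln y \<le> y / exp 1"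
  using ln_le_minus_one[of "y / exp 1"] by (simp add: ln_div)

lemma exp1_mult_ln_le_sqrt: "(y::real) > 0 \<Longrightarrow> exp 1 * ln y \<le> 2 * sqrt y"
  using ln_le_divide_exp1[of "sqrt y"] by (simp add: ln_sqrt field_simps)

text \<open>What remains of \<open>ln_plus_1_sq_mult_less\<close> once \<open>y = s\<^sup>2\<close> and \<open>e\<close> is replaced by the bounds
  \<open>27/10 \<le> e \<le> 68/25\<close>.\<close>
lemma sqrt_bound_polynomial:
  assumes s: "(s::real) \<ge> 11/5"
  shows "((2 * s + 68/25) * s)\<^sup>2 < (27/10) ^ 3 * (s\<^sup>2 - 1)\<^sup>2"
proof -
  have "11/5 * s \<le> s * s"
    using s by (intro mult_right_mono) auto
  then have "(2 * s + 68/25) * s < 1109/250 * (s\<^sup>2 - 1)"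
    unfolding power2_eq_square distrib_right right_diff_distrib mult.assoc using s by linarith
  then have "((2 * s + 68/25) * s)\<^sup>2 < (1109/250 * (s\<^sup>2 - 1))\<^sup>2"
    using s by (intro power_strict_mono) auto
  also have "\<dots> \<le> (27/10) ^ 3 * (s\<^sup>2 - 1)\<^sup>2"
    unfolding power_mult_distrib by (intro mult_right_mono) (auto simp: power2_eq_square power3_eq_cube)
  finally show ?thesis .
qed

lemma ln_plus_1_sq_mult_less:
  assumes y: "(y::real) \<ge> 5"
  shows "(ln y + 1)\<^sup>2 * y < exp 1 * (y - 1)\<^sup>2"
proof -
  define s where "s = sqrt y"
  define e where "e = exp (1::real)"
  have s: "s\<^sup>2 = y" "s \<ge> 11/5"
    using y unfolding s_def by (simp, intro real_le_rsqrt) (simp add: power2_eq_square)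
  have e: "27/10 \<le> e" "e \<le> 68/25"
    using e_approx_32 unfolding e_def abs_le_iff by auto
  have "0 \<le> e * (ln y + 1)"
    using y e by simp
  moreover have "e * (ln y + 1) \<le> 2 * s + 68/25"
    using exp1_mult_ln_le_sqrt[of y] y e by (simp add: s_def e_def algebra_simps)
  ultimately have "(e * (ln y + 1))\<^sup>2 * s\<^sup>2 \<le> (2 * s + 68/25)\<^sup>2 * s\<^sup>2"
    by (intro mult_right_mono power_mono) auto
  then have "e\<^sup>2 * ((ln y + 1)\<^sup>2 * y) \<le> ((2 * s + 68/25) * s)\<^sup>2"
    using s by (simp add: power_mult_distrib mult_ac)
  also have "\<dots> < (27/10) ^ 3 * (y - 1)\<^sup>2"
    using sqrt_bound_polynomial[of s] s by simp
  also have "\<dots> \<le> e ^ 3 * (y - 1)\<^sup>2"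
    using e by (intro mult_right_mono power_mono) auto
  finally have "e\<^sup>2 * ((ln y + 1)\<^sup>2 * y) < e\<^sup>2 * (e * (y - 1)\<^sup>2)"
    by (simp add: power_numeral_reduce)
  then show ?thesis
    by (simp add: e_def)
qed

theorem mainTheorem16:
  fixes x :: real
  assumes "x \<ge> 4"
  shows "deriv H x > H x * ln (H x) / x ^ 2"
proof -
  define h where "h = H x"
  have h: "1 \<le> h" "h \<le> ln (x + 1) + 1"
    using H_ge_1 H_le_ln_plus_1 assms by (auto simp: h_def)
  have "h * ln h \<le> h\<^sup>2 / exp 1"
    using h ln_le_divide_exp1[of h] mult_left_mono by (fastforce simp: power2_eq_square)
  also have "\<dots> \<le> (ln (x + 1) + 1)\<^sup>2 / exp 1"
    using h by (intro divide_right_mono power_mono) auto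
  also have "\<dots> < x\<^sup>2 / (x + 1)"
    using ln_plus_1_sq_mult_less[of "x + 1"] assms by (simp add: field_simps)
  finally have "h * ln h / x\<^sup>2 < 1 / (x + 1)"
    using assms by (simp add: field_simps)
  also have "\<dots> \<le> Polygamma 1 (x + 1)"
    using Polygamma_1_ge_inverse[of "x + 1"] assms by simp
  also have "\<dots> = deriv H x"
    using H_has_real_derivative[of x] assms by (simp add: DERIV_imp_deriv)
  finally show ?thesis
    by (simp add: h_def)
qed

end
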